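(* Let $\Sigma_1,\Sigma_2$ be alphabets with $\Sigma_1\subset\Sigma_2$. If $\varphi_1:\Sigma_1^+\to\Sigma_1^+$ is a reducible Parikh-positive morphism, then there exists a reducible Parikh-positive morphism $\varphi_2:\Sigma_2^+\to\Sigma_2^+$ such that $\varphi_2(a_i)=\varphi_1(a_i)$ for all $a_i\in\Sigma_1$ and $\varphi_2(a_j)=a_j$ for all $a_j\in\Sigma_2\setminus\Sigma_1$.
   Context: A morphism $\varphi:\Sigma^+\to\Sigma^+$ with $\Sigma=\{a_1,\dots,a_n\}$ satisfies $\varphi(uv)=\varphi(u)\varphi(v)$ (non-empty images); it is Parikh-positive if every letter of $\Sigma$ occurs in $\varphi(a_1)\cdots\varphi(a_n)$. An automorphism is an injective morphism mapping each letter to a single letter. A morphism $\varphi:\Sigma^+\to\Sigma^+$ is reducible if it equals $\psi_2\circ\psi_1$ for morphisms $\psi_1,\psi_2:\Sigma^+\to\Sigma^+$ neither of which is an automorphism. *)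

theory Defs
  imports Main
begin

text \<open>A morphism S^+ -> S^+ is determined by its images of the letters; we represent it by the
letter map f :: 'a => 'a list and extend it homomorphically by ext_morph.\<close>

definition words :: "'a set \<Rightarrow> 'a list set" where
  "words S = {w. w \<noteq> [] \<and> set w \<subseteq> S}"

definition ext_morph :: "('a \<Rightarrow> 'a list) \<Rightarrow> 'a list \<Rightarrow> 'a list" where
  "ext_morph f w = concat (map f w)"

definition is_morphism :: "'a set \<Rightarrow> ('a \<Rightarrow> 'a list) \<Rightarrow> bool" where
  "is_morphism S f \<longleftrightarrow> (\<forall>a\<in>S. f a \<in> words S)"

definition parikh_positive :: "'a set \<Rightarrow> ('a \<Rightarrow> 'a list) \<Rightarrow> bool" where
  "parikh_positive S f \<longleftrightarrow> (\<forall>b\<in>S. \<exists>a\<in>S. b \<in> set (f a))"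

definition is_automorphism :: "'a set \<Rightarrow> ('a \<Rightarrow> 'a list) \<Rightarrow> bool" where
  "is_automorphism S f \<longleftrightarrow> is_morphism S f \<and> (\<forall>a\<in>S. length (f a) = 1)
     \<and> inj_on (ext_morph f) (words S)"

text \<open>Reducible: phi = psi2 o psi1 for morphisms psi1, psi2 on S^+ neither of which is an
automorphism. Two morphisms are equal iff they agree on all letters.\<close>
definition reducible :: "'a set \<Rightarrow> ('a \<Rightarrow> 'a list) \<Rightarrow> bool" where
  "reducible S f \<longleftrightarrow> (\<exists>\<psi>1 \<psi>2. is_morphism S \<psi>1 \<and> is_morphism S \<psi>2
     \<and> \<not> is_automorphism S \<psi>1 \<and> \<not> is_automorphism S \<psi>2
     \<and> (\<forall>a\<in>S. f a = ext_morph \<psi>2 (\<psi>1 a)))"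

end

theory Submission
  imports Defs
begin

text \<open>Extend both factors of \<open>\<phi>\<^sub>1 = \<psi>\<^sub>2 \<circ> \<psi>\<^sub>1\<close> by the identity on the new letters.
The extensions compose to the identity extension of \<open>\<phi>\<^sub>1\<close>, and they are still not automorphisms:
on \<open>S\<^sub>1\<^sup>+\<close> an extension agrees with the original factor, so injectivity and the
letter-to-letter property would descend to it.\<close>

definition extend_id :: "'a set \<Rightarrow> ('a \<Rightarrow> 'a list) \<Rightarrow> 'a \<Rightarrow> 'a list" where
  "extend_id S f a = (if a \<in> S then f a else [a])"

lemma ext_morph_cong:
  assumes "set w \<subseteq> S" and "\<forall>a\<in>S. f a = g a"
  shows "ext_morph f w = ext_morph g w"
  using assms unfolding ext_morph_def by (induction w) auto

lemma ext_morph_extend_id: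
  assumes "set w \<subseteq> S"
  shows "ext_morph (extend_id S f) w = ext_morph f w"
  using assms by (intro ext_morph_cong) (auto simp: extend_id_def)

lemma is_morphism_extend_id:
  assumes "S1 \<subseteq> S2" and "is_morphism S1 f"
  shows "is_morphism S2 (extend_id S1 f)"
  using assms unfolding is_morphism_def words_def extend_id_def by auto

lemma parikh_positive_extend_id:
  assumes "S1 \<subseteq> S2" and "parikh_positive S1 f"
  shows "parikh_positive S2 (extend_id S1 f)"
  using assms unfolding parikh_positive_def extend_id_def by fastforce

lemma is_automorphism_extend_idD:
  assumes "S1 \<subseteq> S2" and "is_morphism S1 f" and "is_automorphism S2 (extend_id S1 f)"
  shows "is_automorphism S1 f"
proof -
  have "length (f a) = 1" if "a \<in> S1" for a
  proof -
    have "length (extend_id S1 f a) = 1"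
      using assms(1,3) that unfolding is_automorphism_def by blast
    then show ?thesis using that by (simp add: extend_id_def)
  qed
  moreover have "words S1 \<subseteq> words S2"
    using assms(1) unfolding words_def by blast
  then have "inj_on (ext_morph (extend_id S1 f)) (words S1)"
    using assms(3) inj_on_subset unfolding is_automorphism_def by blast
  then have "inj_on (ext_morph f) (words S1)"
    by (simp add: inj_on_def ext_morph_extend_id words_def)
  ultimately show ?thesis
    using assms(2) unfolding is_automorphism_def by blast
qed

lemma extend_id_comp:
  assumes "is_morphism S \<psi>1"
  shows "extend_id S (\<lambda>a. ext_morph \<psi>2 (\<psi>1 a)) a
           = ext_morph (extend_id S \<psi>2) (extend_id S \<psi>1 a)"
proof (cases "a \<in> S")
  case True
  then have "set (\<psi>1 a) \<subseteq> S"
    using assms unfolding is_morphism_def words_def by auto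
  then show ?thesis
    using True by (simp add: extend_id_def ext_morph_extend_id)
qed (simp add: extend_id_def ext_morph_def)

lemma reducible_extend_id:
  assumes "S1 \<subseteq> S2" and "reducible S1 f"
  shows "reducible S2 (extend_id S1 f)"
proof -
  obtain \<psi>1 \<psi>2 where \<psi>: "is_morphism S1 \<psi>1" "is_morphism S1 \<psi>2"
      "\<not> is_automorphism S1 \<psi>1" "\<not> is_automorphism S1 \<psi>2"
      and f: "\<forall>a\<in>S1. f a = ext_morph \<psi>2 (\<psi>1 a)"
    using assms(2) unfolding reducible_def by blast
  have "extend_id S1 f = extend_id S1 (\<lambda>a. ext_morph \<psi>2 (\<psi>1 a))"
    using f by (auto simp: extend_id_def)
  then have "\<forall>a\<in>S2. extend_id S1 f a = ext_morph (extend_id S1 \<psi>2) (extend_id S1 \<psi>1 a)"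
    using extend_id_comp[OF \<psi>(1)] by simp
  moreover have "is_morphism S2 (extend_id S1 \<psi>1)" "is_morphism S2 (extend_id S1 \<psi>2)"
    using assms(1) \<psi>(1,2) by (blast intro: is_morphism_extend_id)+
  moreover have "\<not> is_automorphism S2 (extend_id S1 \<psi>1)" "\<not> is_automorphism S2 (extend_id S1 \<psi>2)"
    using assms(1) \<psi> is_automorphism_extend_idD by blast+
  ultimately show ?thesis
    unfolding reducible_def by blast
qed

theorem proposition10:
  fixes S1 S2 :: "'a set" and \<phi>1 :: "'a \<Rightarrow> 'a list"
  assumes "finite S2" and "S1 \<noteq> {}" and "S1 \<subset> S2"
    and "is_morphism S1 \<phi>1" and "reducible S1 \<phi>1" and "parikh_positive S1 \<phi>1"
  shows "\<exists>\<phi>2. is_morphism S2 \<phi>2 \<and> reducible S2 \<phi>2 \<and> parikh_positive S2 \<phi>2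
           \<and> (\<forall>a\<in>S1. \<phi>2 a = \<phi>1 a) \<and> (\<forall>a\<in>S2 - S1. \<phi>2 a = [a])"
proof (intro exI conjI)
  have "S1 \<subseteq> S2" using assms(3) by blast
  then show "is_morphism S2 (extend_id S1 \<phi>1)" "reducible S2 (extend_id S1 \<phi>1)"
      "parikh_positive S2 (extend_id S1 \<phi>1)"
    using assms(4-6) by (simp_all add: is_morphism_extend_id reducible_extend_id
        parikh_positive_extend_id)
qed (simp_all add: extend_id_def)

end
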